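(* Let $(C,d_1+\cdots+d_k)$ be a finite-dimensional graded chain complex over a field, where $d_i$ raises the grading by $i$ (so the grading induces a filtration), and suppose its total homology is trivial. Suppose $C$ is concentrated in three adjacent gradings with graded pieces $C_1,C_2,C_3$ satisfying $\dim(C_2)=\dim(C_1)+\dim(C_3)$. Then $H_*(C,d_1)=0$. *)

theory Defs
  imports Complex_Main
begin

definition fin_dim_subspace :: "('k::field \<Rightarrow> 'v::ab_group_add \<Rightarrow> 'v) \<Rightarrow> 'v set \<Rightarrow> bool" where
  "fin_dim_subspace scale S \<longleftrightarrow>
     module.subspace scale S \<and> (\<exists>B. finite B \<and> B \<subseteq> S \<and> module.span scale B = S)"

definition direct_sum3 :: "'v::ab_group_add set \<Rightarrow> 'v set \<Rightarrow> 'v set \<Rightarrow> 'v set" where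
  "direct_sum3 C1 C2 C3 = {x1 + x2 + x3 | x1 x2 x3. x1 \<in> C1 \<and> x2 \<in> C2 \<and> x3 \<in> C3}"

definition independent3 :: "'v::ab_group_add set \<Rightarrow> 'v set \<Rightarrow> 'v set \<Rightarrow> bool" where
  "independent3 C1 C2 C3 \<longleftrightarrow>
     (\<forall>x1\<in>C1. \<forall>x2\<in>C2. \<forall>x3\<in>C3. x1 + x2 + x3 = 0 \<longrightarrow> x1 = 0 \<and> x2 = 0 \<and> x3 = 0)"

definition homology_trivial :: "'v::ab_group_add set \<Rightarrow> ('v \<Rightarrow> 'v) \<Rightarrow> bool" where
  "homology_trivial C d \<longleftrightarrow> (\<forall>x\<in>C. d x = 0 \<longrightarrow> (\<exists>y\<in>C. d y = x))"

end

theory Submission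
  imports Defs
begin

text \<open>The total differential \<open>D = d1 + d2\<close> squares to zero; its component \<open>C1 \<rightarrow> C3\<close> says
  that \<open>d1 \<circ> d1 = 0\<close> on \<open>C1\<close>. Acyclicity of \<open>D\<close> makes \<open>d1\<close> exact at \<open>C2\<close>: if \<open>d1 x2 = 0\<close>
  then \<open>x2 = D y\<close>, and the \<open>C2\<close>-component of \<open>D y\<close> is \<open>d1 y1\<close>. Rank--nullity on \<open>C1\<close> and
  \<open>C2\<close> then turns \<open>dim C2 = dim C1 + dim C3\<close> into
  \<open>dim (ker d1 \<inter> C1) + dim C3 = dim (d1 ` C2) \<le> dim C3\<close>, so \<open>d1\<close> is injective on \<open>C1\<close> and
  maps \<open>C2\<close> onto \<open>C3\<close>; together with exactness at \<open>C2\<close> this is acyclicity of \<open>d1\<close>.\<close>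

context vector_space
begin

lemma fin_dim_subspace_independent_bound:
  assumes S: "fin_dim_subspace scale S" and "T \<subseteq> S" and "independent T"
  shows "finite T \<and> card T \<le> dim S"
proof -
  obtain B0 where "finite B0" "span B0 = S"
    using S unfolding fin_dim_subspace_def by blast
  obtain B where B: "B \<subseteq> S" "independent B" "S \<subseteq> span B" "card B = dim S"
    by (rule basis_exists)
  have "finite B"
    using independent_span_bound[OF \<open>finite B0\<close> B(2)] B(1) \<open>span B0 = S\<close> by auto
  then show ?thesis
    using independent_span_bound[OF \<open>finite B\<close> \<open>independent T\<close>] \<open>T \<subseteq> S\<close> B by auto
qed

lemma fin_dim_subspace_dim_subset:
  assumes "fin_dim_subspace scale T" and "S \<subseteq> T"
  shows "dim S \<le> dim T"
proof -
  obtain B where "B \<subseteq> S" "independent B" "S \<subseteq> span B" "card B = dim S"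
    by (rule basis_exists)
  then show ?thesis
    using fin_dim_subspace_independent_bound[OF assms(1), of B] assms(2) by auto
qed

lemma fin_dim_subspace_subset:
  assumes "fin_dim_subspace scale T" and "subspace S" and "S \<subseteq> T"
  shows "fin_dim_subspace scale S"
proof -
  obtain B where B: "B \<subseteq> S" "independent B" "S \<subseteq> span B"
    by (rule basis_exists)
  have "span B = S"
    using span_minimal[OF B(1) \<open>subspace S\<close>] B(3) by auto
  moreover have "finite B"
    using fin_dim_subspace_independent_bound[OF assms(1) _ B(2)] B(1) \<open>S \<subseteq> T\<close> by auto
  ultimately show ?thesis
    using B(1) \<open>subspace S\<close> unfolding fin_dim_subspace_def by blast
qed

lemma fin_dim_subspace_eq_0_of_dim_eq_0:
  assumes "fin_dim_subspace scale S" and "dim S = 0" and "x \<in> S"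
  shows "x = 0"
proof -
  obtain B where "B \<subseteq> S" "independent B" "S \<subseteq> span B" "card B = dim S"
    by (rule basis_exists)
  with assms have "B = {}"
    using fin_dim_subspace_independent_bound[OF assms(1), of B] by auto
  then show ?thesis
    using \<open>S \<subseteq> span B\<close> \<open>x \<in> S\<close> by auto
qed

lemma fin_dim_subspace_eq_of_dim_le:
  assumes T: "fin_dim_subspace scale T" and "subspace S" and "S \<subseteq> T" and "dim T \<le> dim S"
  shows "S = T"
proof -
  obtain B where B: "B \<subseteq> S" "independent B" "S \<subseteq> span B" "card B = dim S"
    by (rule basis_exists)
  have "finite B"
    using fin_dim_subspace_independent_bound[OF T, of B] B(1,2) \<open>S \<subseteq> T\<close> by auto
  have "T \<subseteq> span B"
  proof
    fix w assume "w \<in> T"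
    show "w \<in> span B"
    proof (rule ccontr)
      assume "w \<notin> span B"
      then have "independent (insert w B)" and "w \<notin> B"
        using independent_insertI[OF _ B(2)] span_superset by auto
      then have "card B < dim T"
        using fin_dim_subspace_independent_bound[OF T, of "insert w B"] \<open>finite B\<close>
          \<open>w \<in> T\<close> B(1) \<open>S \<subseteq> T\<close> by fastforce
      with B(4) \<open>dim T \<le> dim S\<close> show False by simp
    qed
  qed
  moreover have "span B \<subseteq> S"
    using span_minimal[OF B(1) \<open>subspace S\<close>] .
  ultimately show ?thesis
    using \<open>S \<subseteq> T\<close> by auto
qed

lemma independent_Un_span_Int_0:
  assumes "finite R" "finite K" "R \<inter> K = {}" "independent (R \<union> K)"
    and "x \<in> span R" "x \<in> span K"
  shows "x = 0"
proof -
  obtain u where u: "x = (\<Sum>v\<in>R. u v *s v)" using assms(1,5) span_finite by auto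
  obtain w where w: "x = (\<Sum>v\<in>K. w v *s v)" using assms(2,6) span_finite by auto
  define c where "c v = (if v \<in> R then u v else - w v)" for v
  have "(\<Sum>v\<in>R \<union> K. c v *s v) = (\<Sum>v\<in>R. c v *s v) + (\<Sum>v\<in>K. c v *s v)"
    by (rule sum.union_disjoint) (use assms in auto)
  also have "(\<Sum>v\<in>R. c v *s v) = x"
    using u by (simp add: c_def)
  also have "(\<Sum>v\<in>K. c v *s v) = (\<Sum>v\<in>K. - (w v *s v))"
    using assms(3) by (auto simp: c_def scale_minus_left intro!: sum.cong)
  also have "\<dots> = - x"
    using w by (simp add: sum_negf)
  finally have "(\<Sum>v\<in>R \<union> K. c v *s v) = 0" by simp
  then have "\<forall>v\<in>R. u v = 0"
    using independentD[OF assms(4)] assms(1,2) by (force simp: c_def)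
  then show ?thesis
    using u by simp
qed

end

lemma (in vector_space_pair) rank_nullity:
  assumes f: "Vector_Spaces.linear s1 s2 f" and S: "fin_dim_subspace s1 S"
  shows "vs1.dim S = vs1.dim {x\<in>S. f x = 0} + vs2.dim (f ` S)"
proof -
  interpret f: Vector_Spaces.linear s1 s2 f by (rule f)
  define K where "K = {x\<in>S. f x = 0}"
  have "vs1.subspace S"
    using S by (simp add: fin_dim_subspace_def)
  then have "vs1.subspace K"
    using vs1.subspace_inter[OF _ f.subspace_kernel] unfolding K_def by (simp add: Collect_conj_eq)
  obtain BK where BK: "BK \<subseteq> K" "vs1.independent BK" "K \<subseteq> vs1.span BK" "card BK = vs1.dim K"
    by (rule vs1.basis_exists)
  obtain B where B: "BK \<subseteq> B" "B \<subseteq> S" "vs1.independent B" "S \<subseteq> vs1.span B"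
    using vs1.maximal_independent_subset_extend[of BK S] BK(1,2) unfolding K_def by blast
  have "finite B"
    using vs1.fin_dim_subspace_independent_bound[OF S B(2,3)] by simp
  define R where "R = B - BK"
  have "finite R" "finite BK" "R \<union> BK = B" "R \<inter> BK = {}"
    using \<open>finite B\<close> B(1) finite_subset unfolding R_def by auto
  have span_R: "vs1.span R \<subseteq> S"
    using vs1.span_minimal[OF _ \<open>vs1.subspace S\<close>] B(2) unfolding R_def by blast
  have span_BK: "vs1.span BK \<subseteq> K"
    using vs1.span_minimal[OF BK(1) \<open>vs1.subspace K\<close>] .
  have inj: "inj_on f (vs1.span R)"
    unfolding f.inj_on_iff_eq_0[OF vs1.subspace_span]
  proof (intro ballI impI)
    fix x assume "x \<in> vs1.span R" "f x = 0"
    then have "x \<in> vs1.span BK"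
      using span_R BK(3) unfolding K_def by auto
    then show "x = 0"
      using vs1.independent_Un_span_Int_0[OF \<open>finite R\<close> \<open>finite BK\<close>] \<open>x \<in> vs1.span R\<close>
        \<open>R \<union> BK = B\<close> \<open>R \<inter> BK = {}\<close> B(3) by auto
  qed
  have "f ` S \<subseteq> f ` vs1.span R"
  proof
    fix z assume "z \<in> f ` S"
    then obtain y where "y \<in> S" "z = f y" by auto
    then obtain a b where "y = a + b" "a \<in> vs1.span R" "b \<in> vs1.span BK"
      using B(4) \<open>R \<union> BK = B\<close> vs1.span_Un by blast
    moreover have "f b = 0"
      using \<open>b \<in> vs1.span BK\<close> span_BK unfolding K_def by auto
    ultimately show "z \<in> f ` vs1.span R"
      using \<open>z = f y\<close> f.add by auto
  qed
  then have "f ` S = vs2.span (f ` R)"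
    using span_R f.span_image by auto
  then have "vs2.dim (f ` S) = card R"
    using vs2.dim_span_eq_card_independent[OF f.independent_injective_image[OF _ inj]]
      vs1.independent_mono[OF B(3)] card_image[OF inj_on_subset[OF inj vs1.span_superset]]
    unfolding R_def by auto
  moreover have "vs1.dim S = card R + card BK"
    using vs1.basis_card_eq_dim[OF B(2,4,3)] card_Un_disjoint[OF \<open>finite R\<close> \<open>finite BK\<close>]
      \<open>R \<union> BK = B\<close> \<open>R \<inter> BK = {}\<close> by simp
  ultimately show ?thesis
    using BK(4) unfolding K_def by simp
qed

locale graded_complex3 = vector_space scale
  for scale :: "'k::field \<Rightarrow> 'v::ab_group_add \<Rightarrow> 'v" +
  fixes C1 C2 C3 :: "'v set" and d1 d2 :: "'v \<Rightarrow> 'v"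
  assumes fd1: "fin_dim_subspace scale C1"
    and fd2: "fin_dim_subspace scale C2"
    and fd3: "fin_dim_subspace scale C3"
    and indep: "independent3 C1 C2 C3"
    and lin1: "Vector_Spaces.linear scale scale d1"
    and lin2: "Vector_Spaces.linear scale scale d2"
    and d1_C1: "d1 ` C1 \<subseteq> C2"
    and d1_C2: "d1 ` C2 \<subseteq> C3"
    and d1_C3: "d1 ` C3 \<subseteq> {0}"
    and d2_C1: "d2 ` C1 \<subseteq> C3"
    and d2_C2: "d2 ` C2 \<subseteq> {0}"
    and d2_C3: "d2 ` C3 \<subseteq> {0}"
    and dd: "\<forall>x\<in>direct_sum3 C1 C2 C3. d1 (d1 x + d2 x) + d2 (d1 x + d2 x) = 0"
begin

interpretation d1: Vector_Spaces.linear scale scale d1 by (rule lin1)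
interpretation d2: Vector_Spaces.linear scale scale d2 by (rule lin2)

lemma subspace_C1: "subspace C1" and subspace_C2: "subspace C2" and subspace_C3: "subspace C3"
  using fd1 fd2 fd3 by (simp_all add: fin_dim_subspace_def)

lemma zero_in_C1: "0 \<in> C1" and zero_in_C2: "0 \<in> C2" and zero_in_C3: "0 \<in> C3"
  using subspace_C1 subspace_C2 subspace_C3 by (simp_all add: subspace_0)

lemma C1_subset_direct_sum3: "C1 \<subseteq> direct_sum3 C1 C2 C3"
  and C2_subset_direct_sum3: "C2 \<subseteq> direct_sum3 C1 C2 C3"
  unfolding direct_sum3_def using zero_in_C1 zero_in_C2 zero_in_C3 by force+

lemma d1_eq_0_on_C3: "x \<in> C3 \<Longrightarrow> d1 x = 0"
  and d2_eq_0_on_C2: "x \<in> C2 \<Longrightarrow> d2 x = 0"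
  and d2_eq_0_on_C3: "x \<in> C3 \<Longrightarrow> d2 x = 0"
  using d1_C3 d2_C2 d2_C3 by auto

lemma d1_d1_C1: "y \<in> C1 \<Longrightarrow> d1 (d1 y) = 0"
  using dd C1_subset_direct_sum3 d1_C1 d2_C1
  by (force simp: d1.add d2.add d1_eq_0_on_C3 d2_eq_0_on_C2 d2_eq_0_on_C3)

lemma kernel_d1_C2_eq_image_C1:
  assumes "homology_trivial (direct_sum3 C1 C2 C3) (\<lambda>x. d1 x + d2 x)"
  shows "{x\<in>C2. d1 x = 0} = d1 ` C1"
proof
  show "d1 ` C1 \<subseteq> {x\<in>C2. d1 x = 0}"
    using d1_C1 d1_d1_C1 by auto
  show "{x\<in>C2. d1 x = 0} \<subseteq> d1 ` C1"
  proof clarify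
    fix x2 assume "x2 \<in> C2" "d1 x2 = 0"
    then have "d1 x2 + d2 x2 = 0"
      using d2_eq_0_on_C2 by simp
    then obtain y where "y \<in> direct_sum3 C1 C2 C3" "d1 y + d2 y = x2"
      using assms C2_subset_direct_sum3 \<open>x2 \<in> C2\<close> unfolding homology_trivial_def by blast
    then obtain y1 y2 y3 where y: "y = y1 + y2 + y3" "y1 \<in> C1" "y2 \<in> C2" "y3 \<in> C3"
      unfolding direct_sum3_def by blast
    have "d1 y + d2 y = d1 y1 + (d1 y2 + d2 y1)"
      using y by (simp add: d1.add d2.add d1_eq_0_on_C3 d2_eq_0_on_C2 d2_eq_0_on_C3 algebra_simps)
    then have "0 + (d1 y1 - x2) + (d1 y2 + d2 y1) = 0"
      using \<open>d1 y + d2 y = x2\<close> by (simp add: algebra_simps)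
    moreover have "d1 y1 - x2 \<in> C2" "d1 y2 + d2 y1 \<in> C3"
      using y \<open>x2 \<in> C2\<close> d1_C1 d1_C2 d2_C1 subspace_C2 subspace_C3
      by (auto intro!: subspace_diff subspace_add)
    ultimately have "d1 y1 = x2"
      using indep zero_in_C1 unfolding independent3_def by fastforce
    then show "x2 \<in> d1 ` C1"
      using y by blast
  qed
qed

lemma d1_injective_on_C1_and_onto_C3:
  assumes exact: "{x\<in>C2. d1 x = 0} = d1 ` C1"
    and dims: "dim C2 = dim C1 + dim C3"
  shows "\<forall>x\<in>C1. d1 x = 0 \<longrightarrow> x = 0" and "d1 ` C2 = C3"
proof -
  interpret vector_space_pair scale scale ..
  have "dim C1 = dim {x\<in>C1. d1 x = 0} + dim (d1 ` C1)"
    by (rule rank_nullity[OF lin1 fd1])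
  moreover have "dim C2 = dim (d1 ` C1) + dim (d1 ` C2)"
    using rank_nullity[OF lin1 fd2] exact by simp
  moreover have "dim (d1 ` C2) \<le> dim C3"
    using fin_dim_subspace_dim_subset[OF fd3 d1_C2] .
  ultimately have "dim {x\<in>C1. d1 x = 0} = 0" and "dim C3 \<le> dim (d1 ` C2)"
    using dims by linarith+
  have "fin_dim_subspace scale {x\<in>C1. d1 x = 0}"
    using fin_dim_subspace_subset[OF fd1] subspace_inter[OF subspace_C1 d1.subspace_kernel]
    by (simp add: Collect_conj_eq)
  with \<open>dim {x\<in>C1. d1 x = 0} = 0\<close> show "\<forall>x\<in>C1. d1 x = 0 \<longrightarrow> x = 0"
    using fin_dim_subspace_eq_0_of_dim_eq_0 by blast
  show "d1 ` C2 = C3"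
    using fin_dim_subspace_eq_of_dim_le[OF fd3 d1.subspace_image[OF subspace_C2] d1_C2]
      \<open>dim C3 \<le> dim (d1 ` C2)\<close> .
qed

lemma homology_trivial_d1I:
  assumes "\<forall>x\<in>C1. d1 x = 0 \<longrightarrow> x = 0"
    and "{x\<in>C2. d1 x = 0} \<subseteq> d1 ` C1"
    and "C3 \<subseteq> d1 ` C2"
  shows "homology_trivial (direct_sum3 C1 C2 C3) d1"
  unfolding homology_trivial_def
proof (intro ballI impI)
  fix x assume "x \<in> direct_sum3 C1 C2 C3" "d1 x = 0"
  then obtain x1 x2 x3 where x: "x = x1 + x2 + x3" "x1 \<in> C1" "x2 \<in> C2" "x3 \<in> C3"
    unfolding direct_sum3_def by blast
  have "0 + d1 x1 + d1 x2 = 0"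
    using \<open>d1 x = 0\<close> x by (simp add: d1.add d1_eq_0_on_C3)
  moreover have "d1 x1 \<in> C2" "d1 x2 \<in> C3"
    using x d1_C1 d1_C2 by auto
  ultimately have "d1 x1 = 0" "d1 x2 = 0"
    using indep zero_in_C1 unfolding independent3_def by blast+
  then have "x1 = 0"
    using assms(1) x(2) by blast
  obtain y1 where "y1 \<in> C1" "d1 y1 = x2"
    using assms(2) x(3) \<open>d1 x2 = 0\<close> by blast
  obtain y2 where "y2 \<in> C2" "d1 y2 = x3"
    using assms(3) x(4) by blast
  have "y1 + y2 + 0 \<in> direct_sum3 C1 C2 C3"
    unfolding direct_sum3_def using \<open>y1 \<in> C1\<close> \<open>y2 \<in> C2\<close> zero_in_C3 by blast
  moreover have "d1 (y1 + y2 + 0) = x"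
    using \<open>d1 y1 = x2\<close> \<open>d1 y2 = x3\<close> x \<open>x1 = 0\<close> by (simp add: d1.add)
  ultimately show "\<exists>y\<in>direct_sum3 C1 C2 C3. d1 y = x"
    by blast
qed

end

theorem lemma4p10:
  fixes scale :: "'k::field \<Rightarrow> 'v::ab_group_add \<Rightarrow> 'v"
    and C1 C2 C3 :: "'v set"
    and d1 d2 :: "'v \<Rightarrow> 'v"
  assumes vs: "vector_space scale"
    and fd1: "fin_dim_subspace scale C1"
    and fd2: "fin_dim_subspace scale C2"
    and fd3: "fin_dim_subspace scale C3"
    and indep: "independent3 C1 C2 C3"
    and lin1: "Vector_Spaces.linear scale scale d1"
    and lin2: "Vector_Spaces.linear scale scale d2"
    and d1_C1: "d1 ` C1 \<subseteq> C2"
    and d1_C2: "d1 ` C2 \<subseteq> C3"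
    and d1_C3: "d1 ` C3 \<subseteq> {0}"
    and d2_C1: "d2 ` C1 \<subseteq> C3"
    and d2_C2: "d2 ` C2 \<subseteq> {0}"
    and d2_C3: "d2 ` C3 \<subseteq> {0}"
    and dd: "\<forall>x\<in>direct_sum3 C1 C2 C3. d1 (d1 x + d2 x) + d2 (d1 x + d2 x) = 0"
    and total_acyclic: "homology_trivial (direct_sum3 C1 C2 C3) (\<lambda>x. d1 x + d2 x)"
    and dims: "vector_space.dim scale C2 = vector_space.dim scale C1 + vector_space.dim scale C3"
  shows "homology_trivial (direct_sum3 C1 C2 C3) d1"
proof -
  interpret graded_complex3 scale C1 C2 C3 d1 d2
    by (intro graded_complex3.intro graded_complex3_axioms.intro vs) (fact assms)+
  have exact: "{x\<in>C2. d1 x = 0} = d1 ` C1"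
    using total_acyclic by (rule kernel_d1_C2_eq_image_C1)
  have "\<forall>x\<in>C1. d1 x = 0 \<longrightarrow> x = 0" and "d1 ` C2 = C3"
    using d1_injective_on_C1_and_onto_C3[OF exact dims] by blast+
  then show ?thesis
    using exact by (intro homology_trivial_d1I) auto
qed

end
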